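(* Let $k\ge 2$, let $\mu=1/18$, $\rho=0.25\mu^k2^{-\binom k2}$, let $d$ be the smallest positive integer such that for all $r=1,\ldots,k$, $$\frac{\mu-d^{1-2r}}{dr+1}>(1-2^{-r})^d\quad\text{and}\quad\frac{d^{2-2r}-d^{1-2r}}{d+1}>\frac{1}{2^d},$$ let $\delta=\min\{\rho/k^2,\,1/(2kd^{2k})\}$ and $\epsilon=\delta\rho/5$. Let $n$ be sufficiently large, let $T$ be a $k$-partite tournament with vertex classes $A_1,\ldots,A_k$ of size $n$ each which satisfies: for all $1\le s,\ell\le k$, all sequences $A'=(v_1,\ldots,v_q)$ of $q\le d$ distinct elements of $A_\ell$ and all $D\in\{+,-\}^q$, $|C_D(A')\cap A_s|\le n(1/2)^q+n^{2/3}$ (together with the other properties below), and let $\pi$ be any permutation of $V(T)$. Then for every $1\le r\le k$, at most $k-1$ vertices of $A_r$ are not friendly vertices. The other properties assumed of $T$ are: for all $1\le r<k$, all permutations $\pi'$, all perfect $r$-sets $P$, all $R\subseteq P$, $S\subseteq A_{r+1}$ with $|R|,|S|\ge\epsilon n$, $L_{\pi'}(P,T)$ has at least $|R||S|/2^{r+1}$ edges between $R$ and $S$; for all $1\le r<k$, all $\pi'$ and all $S_i\subseteq A_i$ with $|S_i|\ge n/18$, there are at least $0.5(1/18)^rn^r2^{-\binom r2}$ friendly $r$-cliques $\{v_1,\ldots,v_r\}$ of $L_{\pi'}(T)$ with $v_i\in S_i$; and for all $1\le r<k$, $r<t\le k$, all $\hat W=(W_1,\ldots,W_d)\in(\{+,-\}^r)^d$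 and all sequences $\hat p=(p_1,\ldots,p_d)$ of pairwise disjoint $r$-tuples with $i$-th entry in $A_i$, $|I_{\hat W}(\hat p,t)|\le n(1-1/2^r)^d+n^{2/3}$.
   Context: For a permutation (bijection) $\pi:V(T)\to\{1,\ldots,kn\}$, $L_\pi(T)$ is the spanning subgraph of $T$ consisting of all edges $(u,v)\in E(T)$ with $\pi(u)<\pi(v)$, viewed as undirected. A vertex $v\in A_r$ is a friendly vertex (with respect to $\pi$) if for every $i\ne r$, $v$ has at least $n/17$ neighbors in $A_i$ in $L_\pi(T)$. For $D\in\{+,-\}^q$ and $A'=(v_1,\ldots,v_q)$, $C_D(A')$ is the set of vertices $w$ such that for each $j$, $(v_j,w)\in E(T)$ if $D(j)=+$ and $(w,v_j)\in E(T)$ if $D(j)=-$. A perfect $r$-set is a set $P$ of $n$ pairwise disjoint $r$-tuples $(a_1,\ldots,a_r)$ with $a_i\in A_i$; $L_{\pi}(P,T)$ is the bipartite graph on $P\cup A_{r+1}$ where $p=(a_1,\ldots,a_r)\sim v$ iff $\{v,a_i\}\in E(L_{\pi}(T))$ for all $i$. An $r$-clique $\{v_1,\ldots,v_r\}$ of $L_\pi(T)$ with $v_i\in A_i$ is friendly if for every $r<t\le k$ and $1\le r'\le r$, $v_1,\ldots,v_{r'}$ have at least $n/2^{r'+1}$ common neighbors in $A_t$ in $L_\pi(T)$. $v\in A_t$ is $W$-inconsistent with $p=(a_1,\ldots,a_r)$ unless for every $i$, $(v,a_i)\in E(T)\iff W(i)=+$; $I_{\hat W}(\hat p,t)$ is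 the set of $v\in A_t$ that are $W_i$-inconsistent with $p_i$ for all $i$. *)

theory Defs
  imports Complex_Main
begin

(* Vertices are pairs (i,j); class A_i = {i} x {0..<n}; V(T) = A_1 u ... u A_k.
   The tournament T is given by its arc set E (a set of ordered pairs). *)

definition Acls :: "nat \<Rightarrow> nat \<Rightarrow> (nat \<times> nat) set" where
  "Acls n i = {i} \<times> {..<n}"

definition Vset :: "nat \<Rightarrow> nat \<Rightarrow> (nat \<times> nat) set" where
  "Vset k n = (\<Union>i\<in>{1..k}. Acls n i)"

definition multipartite_tournament ::
  "nat \<Rightarrow> nat \<Rightarrow> ((nat \<times> nat) \<times> (nat \<times> nat)) set \<Rightarrow> bool" where
  "multipartite_tournament k n E \<longleftrightarrow>
     E \<subseteq> Vset k n \<times> Vset k n \<and>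
     (\<forall>(u, v)\<in>E. fst u \<noteq> fst v) \<and>
     (\<forall>u\<in>Vset k n. \<forall>v\<in>Vset k n. fst u \<noteq> fst v \<longrightarrow> ((u, v) \<in> E \<longleftrightarrow> (v, u) \<notin> E))"

definition Ladj :: "((nat \<times> nat) \<times> (nat \<times> nat)) set \<Rightarrow> (nat \<times> nat \<Rightarrow> nat)
                    \<Rightarrow> nat \<times> nat \<Rightarrow> nat \<times> nat \<Rightarrow> bool" where
  "Ladj E \<pi> u v \<longleftrightarrow> ((u, v) \<in> E \<and> \<pi> u < \<pi> v) \<or> ((v, u) \<in> E \<and> \<pi> v < \<pi> u)"

definition is_perm :: "nat \<Rightarrow> nat \<Rightarrow> (nat \<times> nat \<Rightarrow> nat) \<Rightarrow> bool" where
  "is_perm k n \<pi> \<longleftrightarrow> bij_betw \<pi> (Vset k n) {1..k*n}"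

definition friendly_vertex ::
  "nat \<Rightarrow> nat \<Rightarrow> ((nat \<times> nat) \<times> (nat \<times> nat)) set \<Rightarrow> (nat \<times> nat \<Rightarrow> nat)
   \<Rightarrow> nat \<Rightarrow> nat \<times> nat \<Rightarrow> bool" where
  "friendly_vertex k n E \<pi> r v \<longleftrightarrow> v \<in> Acls n r \<and>
     (\<forall>i\<in>{1..k}. i \<noteq> r \<longrightarrow> real (card {w \<in> Acls n i. Ladj E \<pi> v w}) \<ge> real n / 17)"

(* C_D(A'): D as a bool list (True = +), A' = vs as a list *)
definition CD :: "((nat \<times> nat) \<times> (nat \<times> nat)) set \<Rightarrow> bool list \<Rightarrow> (nat \<times> nat) list
                  \<Rightarrow> (nat \<times> nat) set" where
  "CD E D vs = {w. \<forall>j<length vs. if D ! j then (vs ! j, w) \<in> E else (w, vs ! j) \<in> E}"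

definition is_rtuple :: "nat \<Rightarrow> nat \<Rightarrow> (nat \<times> nat) list \<Rightarrow> bool" where
  "is_rtuple n r p \<longleftrightarrow> length p = r \<and> (\<forall>i<r. p ! i \<in> Acls n (i + 1))"

definition perfect_rset :: "nat \<Rightarrow> nat \<Rightarrow> (nat \<times> nat) list set \<Rightarrow> bool" where
  "perfect_rset n r P \<longleftrightarrow> finite P \<and> card P = n \<and> (\<forall>p\<in>P. is_rtuple n r p) \<and>
     (\<forall>p\<in>P. \<forall>q\<in>P. p \<noteq> q \<longrightarrow> set p \<inter> set q = {})"

definition LPadj :: "((nat \<times> nat) \<times> (nat \<times> nat)) set \<Rightarrow> (nat \<times> nat \<Rightarrow> nat)
                    \<Rightarrow> (nat \<times> nat) list \<Rightarrow> nat \<times> nat \<Rightarrow> bool" where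
  "LPadj E \<pi> p v \<longleftrightarrow> (\<forall>i<length p. Ladj E \<pi> v (p ! i))"

definition friendly_clique ::
  "nat \<Rightarrow> nat \<Rightarrow> ((nat \<times> nat) \<times> (nat \<times> nat)) set \<Rightarrow> (nat \<times> nat \<Rightarrow> nat)
   \<Rightarrow> nat \<Rightarrow> (nat \<times> nat) list \<Rightarrow> bool" where
  "friendly_clique k n E \<pi> r vs \<longleftrightarrow> is_rtuple n r vs \<and>
     (\<forall>i<r. \<forall>j<r. i \<noteq> j \<longrightarrow> Ladj E \<pi> (vs ! i) (vs ! j)) \<and>
     (\<forall>t. r < t \<and> t \<le> k \<longrightarrow> (\<forall>r'. 1 \<le> r' \<and> r' \<le> r \<longrightarrow>
        real (card {w \<in> Acls n t. \<forall>i<r'. Ladj E \<pi> (vs ! i) w}) \<ge> real n / 2 ^ (r' + 1)))"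

(* v is NOT W-inconsistent with p, i.e. consistent; W as bool list (True = +) *)
definition W_consistent :: "((nat \<times> nat) \<times> (nat \<times> nat)) set \<Rightarrow> bool list
                           \<Rightarrow> (nat \<times> nat) list \<Rightarrow> nat \<times> nat \<Rightarrow> bool" where
  "W_consistent E W p v \<longleftrightarrow> (\<forall>i<length p. ((v, p ! i) \<in> E \<longleftrightarrow> W ! i))"

definition I_set :: "((nat \<times> nat) \<times> (nat \<times> nat)) set \<Rightarrow> nat \<Rightarrow> bool list list
                    \<Rightarrow> (nat \<times> nat) list list \<Rightarrow> nat \<Rightarrow> (nat \<times> nat) set" where
  "I_set E n Ws ps t = {v \<in> Acls n t. \<forall>i<length ps. \<not> W_consistent E (Ws ! i) (ps ! i) v}"

definition mu :: real where "mu = 1 / 18"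

definition rho :: "nat \<Rightarrow> real" where
  "rho k = 0.25 * mu ^ k * 2 powr (- real (k choose 2))"

definition dconst :: "nat \<Rightarrow> nat" where
  "dconst k = (LEAST d::nat. d > 0 \<and> (\<forall>r\<in>{1..k}.
      (mu - real d powr (1 - 2 * real r)) / (real d * real r + 1) > (1 - 2 powr (- real r)) ^ d \<and>
      (real d powr (2 - 2 * real r) - real d powr (1 - 2 * real r)) / (real d + 1) > 1 / 2 ^ d))"

definition delta :: "nat \<Rightarrow> real" where
  "delta k = min (rho k / real k ^ 2) (1 / (2 * real k * real (dconst k) ^ (2 * k)))"

definition eps :: "nat \<Rightarrow> real" where
  "eps k = delta k * rho k / 5"

definition prop_CD :: "nat \<Rightarrow> nat \<Rightarrow> nat \<Rightarrow> ((nat \<times> nat) \<times> (nat \<times> nat)) set \<Rightarrow> bool" where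
  "prop_CD k d n E \<longleftrightarrow> (\<forall>s\<in>{1..k}. \<forall>l\<in>{1..k}. \<forall>vs D.
     distinct vs \<and> set vs \<subseteq> Acls n l \<and> length vs \<le> d \<and> length D = length vs \<longrightarrow>
     real (card (CD E D vs \<inter> Acls n s)) \<le> real n * (1/2) ^ length vs + real n powr (2/3))"

definition prop_LP :: "nat \<Rightarrow> real \<Rightarrow> nat \<Rightarrow> ((nat \<times> nat) \<times> (nat \<times> nat)) set \<Rightarrow> bool" where
  "prop_LP k \<epsilon> n E \<longleftrightarrow> (\<forall>r. 1 \<le> r \<and> r < k \<longrightarrow> (\<forall>\<pi>' P R S.
     is_perm k n \<pi>' \<and> perfect_rset n r P \<and> R \<subseteq> P \<and> S \<subseteq> Acls n (r + 1) \<and>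
     real (card R) \<ge> \<epsilon> * real n \<and> real (card S) \<ge> \<epsilon> * real n \<longrightarrow>
     real (card {(p, v). p \<in> R \<and> v \<in> S \<and> LPadj E \<pi>' p v}) \<ge> real (card R) * real (card S) / 2 ^ (r + 1)))"

definition prop_cliques :: "nat \<Rightarrow> nat \<Rightarrow> ((nat \<times> nat) \<times> (nat \<times> nat)) set \<Rightarrow> bool" where
  "prop_cliques k n E \<longleftrightarrow> (\<forall>r. 1 \<le> r \<and> r < k \<longrightarrow> (\<forall>\<pi>' S.
     is_perm k n \<pi>' \<and> (\<forall>i\<in>{1..r}. S i \<subseteq> Acls n i \<and> real (card (S i)) \<ge> real n / 18) \<longrightarrow>
     real (card {vs. friendly_clique k n E \<pi>' r vs \<and> (\<forall>i<r. vs ! i \<in> S (i + 1))})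
       \<ge> 0.5 * (1/18) ^ r * real n ^ r * 2 powr (- real (r choose 2))))"

definition prop_I :: "nat \<Rightarrow> nat \<Rightarrow> nat \<Rightarrow> ((nat \<times> nat) \<times> (nat \<times> nat)) set \<Rightarrow> bool" where
  "prop_I k d n E \<longleftrightarrow> (\<forall>r t Ws ps. 1 \<le> r \<and> r < k \<and> r < t \<and> t \<le> k \<and>
     length Ws = d \<and> (\<forall>W\<in>set Ws. length W = r) \<and>
     length ps = d \<and> (\<forall>p\<in>set ps. is_rtuple n r p) \<and>
     (\<forall>i<d. \<forall>j<d. i \<noteq> j \<longrightarrow> set (ps ! i) \<inter> set (ps ! j) = {}) \<longrightarrow>
     real (card (I_set E n Ws ps t)) \<le> real n * (1 - 1 / 2 ^ r) ^ d + real n powr (2/3))"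

end

theory Submission
  imports Defs "HOL-Real_Asymp.Real_Asymp"
begin

text \<open>Only the property of the sets \<open>C\<^sub>D\<close>, for pairs (\<open>q = 2 \<le> d\<close>), is needed. If two
  distinct \<open>u, v \<in> A\<^sub>r\<close> both had fewer than \<open>n/17\<close> neighbours in \<open>A\<^sub>i\<close> in \<open>L\<^sub>\<pi>(T)\<close>, then
  more than \<open>15n/17\<close> vertices \<open>w \<in> A\<^sub>i\<close> would be adjacent to neither. For such \<open>w\<close> both
  arcs between \<open>w\<close> and \<open>u, v\<close> point backwards in \<open>\<pi>\<close>, which excludes one of the four
  orientation patterns; so these \<open>w\<close> lie in three sets \<open>C\<^sub>D(u, v)\<close> of size at most
  \<open>n/4 + n\<^sup>2\<^sup>/\<^sup>3\<close> each, fewer than \<open>15n/17\<close> in total. Hence each class \<open>A\<^sub>i\<close>, \<open>i \<noteq> r\<close>,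
  witnesses the unfriendliness of at most one vertex of \<open>A\<^sub>r\<close>.\<close>

lemma eventually_dconst_first_ineq:
  assumes "r \<ge> 1" "0 < a" "a < 1" "c > 0"
  shows "\<forall>\<^sub>F d in sequentially. (c - real d powr (1 - 2 * real r)) / (real d * real r + 1) > a ^ d"
  using assms by real_asymp

lemma eventually_dconst_second_ineq:
  assumes "r \<ge> 1"
  shows "\<forall>\<^sub>F d in sequentially.
           (real d powr (2 - 2 * real r) - real d powr (1 - 2 * real r)) / (real d + 1) > 1 / 2 ^ d"
  using assms by real_asymp

text \<open>Both inequalities hold for all large \<open>d\<close>, so the \<open>LEAST\<close> in \<^const>\<open>dconst\<close> is taken
  over a nonempty set; the second one fails at \<open>d = 1\<close>.\<close>

lemma dconst_ge_2:
  assumes "k \<ge> 1"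
  shows "dconst k \<ge> 2"
proof -
  define P where "P d \<longleftrightarrow> d > 0 \<and> (\<forall>r\<in>{1..k}.
      (mu - real d powr (1 - 2 * real r)) / (real d * real r + 1) > (1 - 2 powr (- real r)) ^ d \<and>
      (real d powr (2 - 2 * real r) - real d powr (1 - 2 * real r)) / (real d + 1) > 1 / 2 ^ d)"
    for d :: nat
  have base: "0 < 1 - 2 powr (- real r)" "1 - 2 powr (- real r) < 1" if "r \<ge> 1" for r :: nat
    using that by (auto simp: powr_minus_divide)
  have "\<forall>\<^sub>F d in sequentially. P d"
    unfolding P_def
    by (intro eventually_conj eventually_gt_at_top eventually_ball_finite ballI
          eventually_dconst_first_ineq eventually_dconst_second_ineq base)
       (auto simp: mu_def)
  then obtain d where "P d"
    by (auto simp: eventually_sequentially)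
  then have "P (dconst k)"
    unfolding dconst_def P_def[symmetric] by (rule LeastI)
  have "\<not> P 1"
    using assms unfolding P_def by auto
  then have "dconst k \<noteq> 1"
    using \<open>P (dconst k)\<close> by metis
  moreover have "dconst k > 0"
    using \<open>P (dconst k)\<close> unfolding P_def by blast
  ultimately show ?thesis
    by linarith
qed

lemma Acls_subset_Vset: "i \<in> {1..k} \<Longrightarrow> Acls n i \<subseteq> Vset k n"
  by (auto simp: Vset_def)

lemma finite_Acls: "finite (Acls n i)"
  by (simp add: Acls_def)

lemma card_Acls: "card (Acls n i) = n"
  by (simp add: Acls_def card_cartesian_product)

lemma fst_Acls: "w \<in> Acls n i \<Longrightarrow> fst w = i"
  by (auto simp: Acls_def)

lemma multipartite_tournament_arc_iff:
  assumes "multipartite_tournament k n E" "u \<in> Vset k n" "w \<in> Vset k n" "fst u \<noteq> fst w"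
  shows "(u, w) \<in> E \<longleftrightarrow> (w, u) \<notin> E"
  using assms unfolding multipartite_tournament_def by blast

lemma not_Ladj_iff:
  assumes "(u, w) \<in> E \<longleftrightarrow> (w, u) \<notin> E" "\<pi> u \<noteq> \<pi> w"
  shows "\<not> Ladj E \<pi> u w \<longleftrightarrow> ((u, w) \<in> E \<longleftrightarrow> \<pi> w < \<pi> u)"
  using assms unfolding Ladj_def by auto

lemma common_non_neighbours_subset_CD:
  assumes T: "multipartite_tournament k n E" and inj: "inj_on \<pi> (Vset k n)"
    and r: "r \<in> {1..k}" and i: "i \<in> {1..k}" "i \<noteq> r"
    and u: "u \<in> Acls n r" and v: "v \<in> Acls n r"
  shows "{w \<in> Acls n i. \<not> Ladj E \<pi> u w \<and> \<not> Ladj E \<pi> v w}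
           \<subseteq> (CD E [True, True] [u, v] \<union> CD E [False, False] [u, v]
               \<union> CD E [\<pi> v < \<pi> u, \<pi> u < \<pi> v] [u, v]) \<inter> Acls n i"
proof
  fix w
  assume "w \<in> {w \<in> Acls n i. \<not> Ladj E \<pi> u w \<and> \<not> Ladj E \<pi> v w}"
  then have w: "w \<in> Acls n i" and nu: "\<not> Ladj E \<pi> u w" and nv: "\<not> Ladj E \<pi> v w"
    by auto
  have "w \<in> Vset k n" "u \<in> Vset k n" "v \<in> Vset k n" "fst w = i" "fst u = r" "fst v = r"
    using w u v Acls_subset_Vset[OF i(1)] Acls_subset_Vset[OF r] fst_Acls by blast+
  then have arc_u: "(u, w) \<in> E \<longleftrightarrow> (w, u) \<notin> E" and arc_v: "(v, w) \<in> E \<longleftrightarrow> (w, v) \<notin> E"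
    and "\<pi> u \<noteq> \<pi> w" "\<pi> v \<noteq> \<pi> w"
    using multipartite_tournament_arc_iff[OF T] inj_onD[OF inj] i(2) by metis+
  then have back_u: "(u, w) \<in> E \<longleftrightarrow> \<pi> w < \<pi> u" and back_v: "(v, w) \<in> E \<longleftrightarrow> \<pi> w < \<pi> v"
    using nu nv not_Ladj_iff by blast+
  have CD_pair: "w \<in> CD E [a, b] [u, v] \<longleftrightarrow> ((u, w) \<in> E \<longleftrightarrow> a) \<and> ((v, w) \<in> E \<longleftrightarrow> b)" for a b
    using arc_u arc_v by (auto simp: CD_def less_Suc_eq)
  show "w \<in> (CD E [True, True] [u, v] \<union> CD E [False, False] [u, v]
               \<union> CD E [\<pi> v < \<pi> u, \<pi> u < \<pi> v] [u, v]) \<inter> Acls n i"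
    using w back_u back_v by (simp add: CD_pair) linarith
qed

lemma card_CD_pair_le:
  assumes "prop_CD k d n E" "d \<ge> 2" "r \<in> {1..k}" "i \<in> {1..k}"
    "u \<in> Acls n r" "v \<in> Acls n r" "u \<noteq> v" "length D = 2"
  shows "real (card (CD E D [u, v] \<inter> Acls n i)) \<le> real n / 4 + real n powr (2/3)"
proof -
  have "\<forall>vs D. distinct vs \<and> set vs \<subseteq> Acls n r \<and> length vs \<le> d \<and> length D = length vs \<longrightarrow>
          real (card (CD E D vs \<inter> Acls n i)) \<le> real n * (1/2) ^ length vs + real n powr (2/3)"
    using assms(1,3,4) unfolding prop_CD_def by blast
  from this[rule_format, of "[u, v]" D] show ?thesis
    using assms(2,5-8) by (simp add: power2_eq_square)
qed

lemma card_common_non_neighbours_le: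
  assumes T: "multipartite_tournament k n E" and CD: "prop_CD k d n E" and "d \<ge> 2"
    and inj: "inj_on \<pi> (Vset k n)"
    and r: "r \<in> {1..k}" and i: "i \<in> {1..k}" "i \<noteq> r"
    and u: "u \<in> Acls n r" and v: "v \<in> Acls n r" and "u \<noteq> v"
  shows "real (card {w \<in> Acls n i. \<not> Ladj E \<pi> u w \<and> \<not> Ladj E \<pi> v w})
           \<le> 3 * (real n / 4 + real n powr (2/3))"
proof -
  define C where "C D = CD E D [u, v] \<inter> Acls n i" for D
  have bound: "real (card (C D)) \<le> real n / 4 + real n powr (2/3)" if "length D = 2" for D
    using card_CD_pair_le[OF CD \<open>d \<ge> 2\<close> r i(1) u v \<open>u \<noteq> v\<close> that] unfolding C_def .
  have "card {w \<in> Acls n i. \<not> Ladj E \<pi> u w \<and> \<not> Ladj E \<pi> v w}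
          \<le> card (C [True, True] \<union> C [False, False] \<union> C [\<pi> v < \<pi> u, \<pi> u < \<pi> v])"
    using common_non_neighbours_subset_CD[OF T inj r i u v] finite_Acls unfolding C_def
    by (intro card_mono) auto
  also have "\<dots> \<le> card (C [True, True]) + card (C [False, False]) + card (C [\<pi> v < \<pi> u, \<pi> u < \<pi> v])"
    by (meson card_Un_le add_le_mono le_trans order_refl)
  finally show ?thesis
    using bound[of "[True, True]"] bound[of "[False, False]"] bound[of "[\<pi> v < \<pi> u, \<pi> u < \<pi> v]"]
    by simp
qed

lemma sparse_vertices_towards_class_unique:
  assumes T: "multipartite_tournament k n E" and CD: "prop_CD k d n E" and "d \<ge> 2"
    and inj: "inj_on \<pi> (Vset k n)" and small: "real n powr (2/3) \<le> real n / 24"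
    and r: "r \<in> {1..k}" and i: "i \<in> {1..k}" "i \<noteq> r"
    and u: "u \<in> Acls n r" and v: "v \<in> Acls n r"
    and sparse_u: "real (card {w \<in> Acls n i. Ladj E \<pi> u w}) < real n / 17"
    and sparse_v: "real (card {w \<in> Acls n i. Ladj E \<pi> v w}) < real n / 17"
  shows "u = v"
proof (rule ccontr)
  assume "u \<noteq> v"
  define N where "N x = {w \<in> Acls n i. Ladj E \<pi> x w}" for x
  define X where "X = {w \<in> Acls n i. \<not> Ladj E \<pi> u w \<and> \<not> Ladj E \<pi> v w}"
  have "n = card (Acls n i)"
    by (simp add: card_Acls)
  also have "\<dots> \<le> card (X \<union> N u \<union> N v)"
    using finite_Acls unfolding X_def N_def by (intro card_mono) auto
  also have "\<dots> \<le> card X + card (N u) + card (N v)"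
    by (meson card_Un_le add_le_mono le_trans order_refl)
  finally have "real (card X) > 15 * real n / 17"
    using sparse_u sparse_v unfolding N_def by linarith
  moreover have "real (card X) \<le> 3 * (real n / 4 + real n powr (2/3))"
    using card_common_non_neighbours_le[OF T CD \<open>d \<ge> 2\<close> inj r i u v \<open>u \<noteq> v\<close>] unfolding X_def .
  ultimately show False
    using small by (simp add: field_simps)
qed

lemma card_not_friendly_le:
  assumes T: "multipartite_tournament k n E" and CD: "prop_CD k d n E" and "d \<ge> 2"
    and \<pi>: "is_perm k n \<pi>" and small: "real n powr (2/3) \<le> real n / 24" and r: "r \<in> {1..k}"
  shows "card {v \<in> Acls n r. \<not> friendly_vertex k n E \<pi> r v} \<le> k - 1"
proof -
  define sparse where "sparse v i \<longleftrightarrow> real (card {w \<in> Acls n i. Ladj E \<pi> v w}) < real n / 17"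
    for v i
  have inj: "inj_on \<pi> (Vset k n)"
    using \<pi> by (simp add: is_perm_def bij_betw_def)
  have "card {v \<in> Acls n r. \<not> friendly_vertex k n E \<pi> r v} \<le> card ({1..k} - {r})"
  proof (rule card_le_if_inj_on_rel[where r = sparse])
    show "\<exists>i. i \<in> {1..k} - {r} \<and> sparse v i"
      if "v \<in> {v \<in> Acls n r. \<not> friendly_vertex k n E \<pi> r v}" for v
      using that by (auto simp: sparse_def friendly_vertex_def not_le)
    show "u = v"
      if "u \<in> {v \<in> Acls n r. \<not> friendly_vertex k n E \<pi> r v}"
        "v \<in> {v \<in> Acls n r. \<not> friendly_vertex k n E \<pi> r v}"
        "i \<in> {1..k} - {r}" "sparse u i" "sparse v i"
      for u v i
      using sparse_vertices_towards_class_unique[OF T CD \<open>d \<ge> 2\<close> inj small r] that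
      unfolding sparse_def by blast
  qed simp
  then show ?thesis
    using r by simp
qed

theorem lemma4p14:
  fixes k :: nat
  assumes "k \<ge> 2"
  shows "\<exists>N. \<forall>n\<ge>N. \<forall>E \<pi>.
           multipartite_tournament k n E \<and>
           prop_CD k (dconst k) n E \<and>
           prop_LP k (eps k) n E \<and>
           prop_cliques k n E \<and>
           prop_I k (dconst k) n E \<and>
           is_perm k n \<pi>
           \<longrightarrow> (\<forall>r\<in>{1..k}. card {v \<in> Acls n r. \<not> friendly_vertex k n E \<pi> r v} \<le> k - 1)"
proof -
  have "\<forall>\<^sub>F n in sequentially. real n powr (2/3) \<le> real n / 24"
    by real_asymp
  then obtain N where "real n powr (2/3) \<le> real n / 24" if "n \<ge> N" for n
    by (auto simp: eventually_sequentially)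
  moreover have "dconst k \<ge> 2"
    using assms dconst_ge_2 by simp
  ultimately show ?thesis
    using card_not_friendly_le by blast
qed

end
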